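(* Let $\mathcal{A}=\{0,1\}$, contexts $X$ with density $p(x)$, real outcome $Y$ with density $p(y\mid x,a)$, behaviour policy $\pi^b(a\mid x)>0$ for all $a,x$; $p_\pi(x,a,y)=p(y\mid x,a)\pi(a\mid x)p(x)$ with $Y$-marginal $p_\pi(y)$; $\pi^{(a)}(a'\mid x)=\mathbb{1}(a'=a)$; $\rho_{\mathrm{ATE}}(a,x)=\frac{\mathbb{1}(a=1)-\mathbb{1}(a=0)}{\pi^b(a\mid x)}$, $w_{\mathrm{ATE}}(y)=\frac{p_{\pi^{(1)}}(y)-p_{\pi^{(0)}}(y)}{p_{\pi^b}(y)}$, $\mu(a,x)=\mathbb{E}[Y\mid X=x,A=a]$. For a fixed function $\hat\mu$ and i.i.d. $(x_i,a_i,y_i)_{i=1}^n$ from $p_{\pi^b}$ define $$\widehat{\mathrm{ATE}}_{\mathrm{DR}}=\frac1n\sum_i\rho_{\mathrm{ATE}}(a_i,x_i)(y_i-\hat\mu(a_i,x_i))+\frac1n\sum_i(\hat\mu(1,x_i)-\hat\mu(0,x_i)),\quad\widehat{\mathrm{ATE}}_{\mathrm{MR}}=\frac1n\sum_iw_{\mathrm{ATE}}(y_i)y_i$$ (exact weights). Then $$\mathbb{V}[\widehat{\mathrm{ATE}}_{\mathrm{DR}}]-\mathbb{V}[\widehat{\mathrm{ATE}}_{\mathrm{MR}}]\ge\frac1n\mathbb{E}\Big[\mathbb{V}[\rho_{\mathrm{ATE}}(A,X)Y\mid Y]-\mathbb{V}[\rho_{\mathrm{ATE}}(A,X)\mu(A,X)\mid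 X]\Big].$$
   Context: All expectations and variances are under $p_{\pi^b}$. *)

theory Defs
  imports "HOL-Probability.Probability"
begin

text \<open>Actions A = {0,1} are encoded as bool (True = 1, False = 0).
 A single observation is a triple ((x, a), y).\<close>

type_synonym ('x) obs = "('x \<times> bool) \<times> real"

definition ctx :: "'x obs \<Rightarrow> 'x" where "ctx z = fst (fst z)"
definition act :: "'x obs \<Rightarrow> bool" where "act z = snd (fst z)"
definition outc :: "'x obs \<Rightarrow> real" where "outc z = snd z"

definition base :: "'x measure \<Rightarrow> 'x obs measure" where
  "base MX = (MX \<Otimes>\<^sub>M count_space UNIV) \<Otimes>\<^sub>M lborel"

definition joint_dens ::
  "('x \<Rightarrow> real) \<Rightarrow> ('x \<Rightarrow> bool \<Rightarrow> real \<Rightarrow> real) \<Rightarrow> (bool \<Rightarrow> 'x \<Rightarrow> real) \<Rightarrow> 'x obs \<Rightarrow> real" where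
  "joint_dens px py pol z = py (ctx z) (act z) (outc z) * pol (act z) (ctx z) * px (ctx z)"

definition obs_dist ::
  "'x measure \<Rightarrow> ('x \<Rightarrow> real) \<Rightarrow> ('x \<Rightarrow> bool \<Rightarrow> real \<Rightarrow> real) \<Rightarrow> (bool \<Rightarrow> 'x \<Rightarrow> real) \<Rightarrow> 'x obs measure" where
  "obs_dist MX px py pol = density (base MX) (\<lambda>z. ennreal (joint_dens px py pol z))"

definition marg_Y ::
  "'x measure \<Rightarrow> ('x \<Rightarrow> real) \<Rightarrow> ('x \<Rightarrow> bool \<Rightarrow> real \<Rightarrow> real) \<Rightarrow> (bool \<Rightarrow> 'x \<Rightarrow> real) \<Rightarrow> real \<Rightarrow> real" where
  "marg_Y MX px py pol y = (\<integral>x. (\<Sum>a\<in>UNIV. py x a y * pol a x * px x) \<partial>MX)"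

definition pol_det :: "bool \<Rightarrow> bool \<Rightarrow> 'x \<Rightarrow> real" where
  "pol_det a a' x = (if a' = a then 1 else 0)"

definition rho_ATE :: "(bool \<Rightarrow> 'x \<Rightarrow> real) \<Rightarrow> bool \<Rightarrow> 'x \<Rightarrow> real" where
  "rho_ATE pib a x = ((if a then 1 else 0) - (if \<not> a then 1 else 0)) / pib a x"

definition w_ATE ::
  "'x measure \<Rightarrow> ('x \<Rightarrow> real) \<Rightarrow> ('x \<Rightarrow> bool \<Rightarrow> real \<Rightarrow> real) \<Rightarrow> (bool \<Rightarrow> 'x \<Rightarrow> real) \<Rightarrow> real \<Rightarrow> real" where
  "w_ATE MX px py pib y =
     (marg_Y MX px py (pol_det True) y - marg_Y MX px py (pol_det False) y) / marg_Y MX px py pib y"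

definition mu_reg :: "('x \<Rightarrow> bool \<Rightarrow> real \<Rightarrow> real) \<Rightarrow> bool \<Rightarrow> 'x \<Rightarrow> real" where
  "mu_reg py a x = (\<integral>y. y * py x a y \<partial>lborel)"

definition sample_dist :: "nat \<Rightarrow> 'x obs measure \<Rightarrow> (nat \<Rightarrow> 'x obs) measure" where
  "sample_dist n M = PiM {..<n} (\<lambda>_. M)"

definition ATE_DR ::
  "nat \<Rightarrow> (bool \<Rightarrow> 'x \<Rightarrow> real) \<Rightarrow> (bool \<Rightarrow> 'x \<Rightarrow> real) \<Rightarrow> (nat \<Rightarrow> 'x obs) \<Rightarrow> real" where
  "ATE_DR n pib muh s =
     (1 / real n) * (\<Sum>i<n. rho_ATE pib (act (s i)) (ctx (s i)) * (outc (s i) - muh (act (s i)) (ctx (s i))))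
   + (1 / real n) * (\<Sum>i<n. muh True (ctx (s i)) - muh False (ctx (s i)))"

definition ATE_MR :: "nat \<Rightarrow> (real \<Rightarrow> real) \<Rightarrow> (nat \<Rightarrow> 'x obs) \<Rightarrow> real" where
  "ATE_MR n w s = (1 / real n) * (\<Sum>i<n. w (outc (s i)) * outc (s i))"

definition Var :: "'a measure \<Rightarrow> ('a \<Rightarrow> real) \<Rightarrow> real" where
  "Var M f = (\<integral>z. (f z - (\<integral>u. f u \<partial>M))\<^sup>2 \<partial>M)"

definition cond_var :: "'a measure \<Rightarrow> 'a measure \<Rightarrow> ('a \<Rightarrow> real) \<Rightarrow> 'a \<Rightarrow> real" where
  "cond_var M F f = real_cond_exp M F (\<lambda>z. (f z - real_cond_exp M F f z)\<^sup>2)"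

definition sigma_Y :: "'x obs measure \<Rightarrow> 'x obs measure" where
  "sigma_Y M = vimage_algebra (space M) outc borel"
definition sigma_X :: "'x measure \<Rightarrow> 'x obs measure \<Rightarrow> 'x obs measure" where
  "sigma_X MX M = vimage_algebra (space M) ctx MX"

end

theory Submission
  imports Defs
begin

text \<open>
  Write the DR summand as \<open>f - g\<close> with \<open>f = \<rho>(A,X) Y\<close> and the control variate
  \<open>g = \<rho>(A,X) muh(A,X) - (muh(1,X) - muh(0,X))\<close>, the MR summand as \<open>W = w(Y) Y\<close>,
  and let \<open>r = \<rho>(A,X) \<mu>(A,X)\<close>.
  Since \<open>w(y) p\<^sub>b(y)\<close> is the integral of \<open>\<rho>\<close> against \<open>p\<^sub>b(x, a, y)\<close>, \<open>W = E[f | Y]\<close>;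
  since \<open>\<pi>\<^sup>b(\<cdot> | x)\<close> sums to one, \<open>E[g | X] = 0\<close>; and integrating out \<open>Y\<close> given
  \<open>(X, A)\<close> gives \<open>E[f g] = E[r g]\<close>. Expanding all second moments, the variance gap minus
  \<open>E[Var(f | Y)] - E[Var(r | X)]\<close> becomes \<open>E[Var(r - g | X)] \<ge> 0\<close>. Averaging \<open>n\<close> i.i.d.
  copies divides every variance by \<open>n\<close>.
\<close>

section \<open>Second moments and sample means\<close>

lemma integrable_mult_of_square_integrable:
  fixes f g :: "'a \<Rightarrow> real"
  assumes [measurable]: "f \<in> borel_measurable M" "g \<in> borel_measurable M"
    and "integrable M (\<lambda>x. (f x)\<^sup>2)" "integrable M (\<lambda>x. (g x)\<^sup>2)"
  shows "integrable M (\<lambda>x. f x * g x)"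
proof (rule Bochner_Integration.integrable_bound[OF Bochner_Integration.integrable_add[OF assms(3,4)]])
  show "(\<lambda>x. f x * g x) \<in> borel_measurable M" by measurable
  have "2 * \<bar>f x * g x\<bar> \<le> (f x)\<^sup>2 + (g x)\<^sup>2" for x
    using sum_squares_bound[of "\<bar>f x\<bar>" "\<bar>g x\<bar>"] by (simp add: abs_mult)
  then show "AE x in M. norm (f x * g x) \<le> norm ((f x)\<^sup>2 + (g x)\<^sup>2)"
    by (intro AE_I2) (smt (verit) real_norm_def zero_le_power2)
qed

lemma square_integrable_diff:
  fixes f g :: "'a \<Rightarrow> real"
  assumes [measurable]: "f \<in> borel_measurable M" "g \<in> borel_measurable M"
    and "integrable M (\<lambda>x. (f x)\<^sup>2)" "integrable M (\<lambda>x. (g x)\<^sup>2)"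
  shows "integrable M (\<lambda>x. (f x - g x)\<^sup>2)"
    and "(\<integral>x. (f x - g x)\<^sup>2 \<partial>M)
           = (\<integral>x. (f x)\<^sup>2 \<partial>M) - 2 * (\<integral>x. f x * g x \<partial>M) + (\<integral>x. (g x)\<^sup>2 \<partial>M)"
proof -
  have fg: "integrable M (\<lambda>x. f x * g x)"
    by (rule integrable_mult_of_square_integrable[OF assms])
  have eq: "(\<lambda>x. (f x - g x)\<^sup>2) = (\<lambda>x. ((f x)\<^sup>2 - 2 * (f x * g x)) + (g x)\<^sup>2)"
    by (auto simp: power2_eq_square algebra_simps)
  show "integrable M (\<lambda>x. (f x - g x)\<^sup>2)"
    unfolding eq using fg assms(3,4) by auto
  show "(\<integral>x. (f x - g x)\<^sup>2 \<partial>M)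
          = (\<integral>x. (f x)\<^sup>2 \<partial>M) - 2 * (\<integral>x. f x * g x \<partial>M) + (\<integral>x. (g x)\<^sup>2 \<partial>M)"
    unfolding eq using fg assms(3,4) by simp
qed

lemma (in prob_space) Var_eq:
  fixes f :: "'a \<Rightarrow> real"
  assumes "f \<in> borel_measurable M" "integrable M (\<lambda>x. (f x)\<^sup>2)"
  shows "Var M f = (\<integral>x. (f x)\<^sup>2 \<partial>M) - (\<integral>x. f x \<partial>M)\<^sup>2"
  unfolding Var_def using assms square_integrable_imp_integrable variance_eq by blast

lemma (in prob_space) Var_diff:
  fixes f g :: "'a \<Rightarrow> real"
  assumes "f \<in> borel_measurable M" "g \<in> borel_measurable M"
    and "integrable M (\<lambda>x. (f x)\<^sup>2)" "integrable M (\<lambda>x. (g x)\<^sup>2)"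
  shows "Var M (\<lambda>x. f x - g x) = (\<integral>x. (f x)\<^sup>2 \<partial>M) - 2 * (\<integral>x. f x * g x \<partial>M)
           + (\<integral>x. (g x)\<^sup>2 \<partial>M) - ((\<integral>x. f x \<partial>M) - (\<integral>x. g x \<partial>M))\<^sup>2"
proof -
  have "integrable M f" "integrable M g"
    using assms square_integrable_imp_integrable by blast+
  then show ?thesis
    using Var_eq[OF _ square_integrable_diff(1)[OF assms]] square_integrable_diff(2)[OF assms] assms(1,2)
    by simp
qed

lemma (in prob_space) integral_PiM_component:
  fixes g :: "'a \<Rightarrow> real"
  assumes "i \<in> I" "integrable M g"
  shows "integrable (PiM I (\<lambda>_. M)) (\<lambda>s. g (s i))"
    and "(\<integral>s. g (s i) \<partial>PiM I (\<lambda>_. M)) = (\<integral>x. g x \<partial>M)"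
proof -
  interpret product_prob_space "\<lambda>_. M" I by unfold_locales
  have comp: "(\<lambda>s. s i) \<in> PiM I (\<lambda>_. M) \<rightarrow>\<^sub>M M"
    using assms(1) by (rule measurable_component_singleton)
  have distr: "distr (PiM I (\<lambda>_. M)) M (\<lambda>s. s i) = M"
    using PiM_component[OF assms(1)] by simp
  show "integrable (PiM I (\<lambda>_. M)) (\<lambda>s. g (s i))"
    using integrable_distr_eq[OF comp, of g] distr assms(2) by simp
  show "(\<integral>s. g (s i) \<partial>PiM I (\<lambda>_. M)) = (\<integral>x. g x \<partial>M)"
    using integral_distr[OF comp, of g] distr assms(2) by simp
qed

lemma (in prob_space) integral_PiM_two_components:
  fixes g h :: "'a \<Rightarrow> real"
  assumes "finite I" "i \<in> I" "j \<in> I" "i \<noteq> j" "integrable M g" "integrable M h"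
  shows "integrable (PiM I (\<lambda>_. M)) (\<lambda>s. g (s i) * h (s j))"
    and "(\<integral>s. g (s i) * h (s j) \<partial>PiM I (\<lambda>_. M)) = (\<integral>x. g x \<partial>M) * (\<integral>x. h x \<partial>M)"
proof -
  interpret P: product_prob_space "\<lambda>_. M" I by unfold_locales
  define F where "F k v = (if k = i then g v else 1) * (if k = j then h v else 1)" for k v
  have F_int: "integrable M (F k)" for k
    using assms(4-6) unfolding F_def by (cases "k = i"; cases "k = j") auto
  have F_integral: "integral\<^sup>L M (F k) = (if k = i then integral\<^sup>L M g else 1) * (if k = j then integral\<^sup>L M h else 1)" for k
    using assms(4) unfolding F_def by (cases "k = i"; cases "k = j") (auto simp: prob_space)
  have F_prod: "(\<Prod>k\<in>I. F k (s k)) = g (s i) * h (s j)" for s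
    using assms(1-3) by (simp add: F_def prod.distrib)
  show "integrable (PiM I (\<lambda>_. M)) (\<lambda>s. g (s i) * h (s j))"
    using P.product_integrable_prod[OF assms(1), of F] F_int by (simp add: F_prod)
  show "(\<integral>s. g (s i) * h (s j) \<partial>PiM I (\<lambda>_. M)) = (\<integral>x. g x \<partial>M) * (\<integral>x. h x \<partial>M)"
    using P.product_integral_prod[OF assms(1), of F] F_int assms(1-3)
    by (simp add: F_prod F_integral prod.distrib)
qed

lemma (in prob_space) Var_sample_mean:
  fixes D :: "'a \<Rightarrow> real"
  assumes [measurable]: "D \<in> borel_measurable M" and D2: "integrable M (\<lambda>x. (D x)\<^sup>2)" and "n > 0"
  shows "Var (PiM {..<n} (\<lambda>_. M)) (\<lambda>s. (1 / real n) * (\<Sum>i<n. D (s i))) = Var M D / real n"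
proof -
  let ?P = "PiM {..<n} (\<lambda>_. M)"
  define m where "m = (\<integral>x. D x \<partial>M)"
  define C where "C x = D x - m" for x
  have D1: "integrable M D" using square_integrable_imp_integrable[OF _ D2] by simp
  have C1: "integrable M C" and C0: "(\<integral>x. C x \<partial>M) = 0"
    unfolding C_def m_def using D1 by (auto simp: prob_space)
  have C2: "integrable M (\<lambda>x. (C x)\<^sup>2)"
    unfolding C_def using D2 by (intro square_integrable_diff(1)) auto
  have cov: "integrable ?P (\<lambda>s. C (s i) * C (s j))
      \<and> (\<integral>s. C (s i) * C (s j) \<partial>?P) = (if i = j then Var M D else 0)" if "i < n" "j < n" for i j
  proof (cases "i = j")
    case True
    then show ?thesis
      using integral_PiM_component[OF _ C2, of i "{..<n}"] that
      by (simp add: power2_eq_square Var_def C_def m_def)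
  next
    case False
    then show ?thesis
      using integral_PiM_two_components[OF _ _ _ False C1 C1, of "{..<n}"] that C0 by simp
  qed
  have mean: "(\<integral>s. (1 / real n) * (\<Sum>i<n. D (s i)) \<partial>?P) = m"
    using integral_PiM_component[OF _ D1, of _ "{..<n}"] \<open>n > 0\<close>
    by (simp add: m_def Bochner_Integration.integral_sum)
  have centred: "(1 / real n) * (\<Sum>i<n. D (s i)) - m = (1 / real n) * (\<Sum>i<n. C (s i))" for s
    using \<open>n > 0\<close> by (simp add: C_def sum_subtractf field_simps)
  have "Var ?P (\<lambda>s. (1 / real n) * (\<Sum>i<n. D (s i)))
      = (\<integral>s. (1 / real n)\<^sup>2 * (\<Sum>i<n. \<Sum>j<n. C (s i) * C (s j)) \<partial>?P)"
    unfolding Var_def mean centred by (simp add: power2_eq_square sum_product algebra_simps)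
  also have "\<dots> = (1 / real n)\<^sup>2 * (\<Sum>i<n. \<Sum>j<n. \<integral>s. C (s i) * C (s j) \<partial>?P)"
  proof -
    have "(\<integral>s. (\<Sum>i<n. \<Sum>j<n. C (s i) * C (s j)) \<partial>?P) = (\<Sum>i<n. \<integral>s. (\<Sum>j<n. C (s i) * C (s j)) \<partial>?P)"
      using cov by (intro Bochner_Integration.integral_sum Bochner_Integration.integrable_sum) auto
    also have "\<dots> = (\<Sum>i<n. \<Sum>j<n. \<integral>s. C (s i) * C (s j) \<partial>?P)"
      using cov by (intro sum.cong refl Bochner_Integration.integral_sum) auto
    finally show ?thesis by simp
  qed
  also have "\<dots> = Var M D / real n"
    using cov \<open>n > 0\<close> by (simp add: power2_eq_square)
  finally show ?thesis .
qed

section \<open>Conditional variance\<close>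

lemma set_integral_indicator_comp:
  fixes f :: "'a \<Rightarrow> real"
  shows "(\<integral>z\<in>u -` S \<inter> space M. f z \<partial>M) = (\<integral>z. indicator S (u z) * f z \<partial>M)"
  unfolding set_lebesgue_integral_def
  by (rule Bochner_Integration.integral_cong) (auto simp: indicator_def)

lemma integrable_indicator_comp:
  fixes f :: "'a \<Rightarrow> real"
  assumes "integrable M f" "u \<in> M \<rightarrow>\<^sub>M N" "S \<in> sets N"
  shows "integrable M (\<lambda>z. indicator S (u z) * f z)"
proof (rule Bochner_Integration.integrable_bound[OF assms(1)])
  show "(\<lambda>z. indicator S (u z) * f z) \<in> borel_measurable M"
    using assms by measurable
  show "AE z in M. norm (indicator S (u z) * f z) \<le> norm (f z)"
    by (intro AE_I2) (simp add: indicator_def)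
qed

lemma (in finite_measure) finite_measure_subalgebra_vimage_algebra:
  assumes "f \<in> M \<rightarrow>\<^sub>M N"
  shows "finite_measure_subalgebra M (vimage_algebra (space M) f N)"
proof unfold_locales
  show "subalgebra M (vimage_algebra (space M) f N)"
    using measurable_space[OF assms] measurable_sets[OF assms]
    by (auto simp: subalgebra_def sets_vimage_algebra2)
qed

context finite_measure_subalgebra
begin

lemma integral_cond_var:
  fixes f :: "'a \<Rightarrow> real"
  assumes [measurable]: "f \<in> borel_measurable M" and f2: "integrable M (\<lambda>x. (f x)\<^sup>2)"
  shows "integrable M (cond_var M F f)"
    and "(\<integral>x. cond_var M F f x \<partial>M)
           = (\<integral>x. (f x)\<^sup>2 \<partial>M) - (\<integral>x. (real_cond_exp M F f x)\<^sup>2 \<partial>M)"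
proof -
  let ?c = "real_cond_exp M F f"
  have f1: "integrable M f" using square_integrable_imp_integrable[OF _ f2] by simp
  have c2: "integrable M (\<lambda>x. (?c x)\<^sup>2)"
    by (rule integrable_convex_cond_exp[where I = UNIV and q = "\<lambda>x. x\<^sup>2"])
      (auto simp: f1 f2 convex_power_even)
  have d2: "integrable M (\<lambda>x. (f x - ?c x)\<^sup>2)"
    using f2 c2 by (intro square_integrable_diff(1)) auto
  show "integrable M (cond_var M F f)"
    unfolding cond_var_def using d2 by (rule real_cond_exp_int(1))
  have "(\<integral>x. f x * ?c x \<partial>M) = (\<integral>x. (?c x)\<^sup>2 \<partial>M)"
    using real_cond_exp_intg(2)[of ?c f] integrable_mult_of_square_integrable[of ?c M f] c2 f2
    by (simp add: power2_eq_square mult.commute)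
  moreover have "(\<integral>x. cond_var M F f x \<partial>M) = (\<integral>x. (f x - ?c x)\<^sup>2 \<partial>M)"
    unfolding cond_var_def by (rule real_cond_exp_int(2)[OF d2])
  ultimately show "(\<integral>x. cond_var M F f x \<partial>M) = (\<integral>x. (f x)\<^sup>2 \<partial>M) - (\<integral>x. (?c x)\<^sup>2 \<partial>M)"
    using square_integrable_diff(2)[of f M ?c, OF _ _ f2 c2] by simp
qed

lemma integral_cond_var_nonneg:
  fixes f :: "'a \<Rightarrow> real"
  assumes [measurable]: "f \<in> borel_measurable M"
  shows "0 \<le> (\<integral>x. cond_var M F f x \<partial>M)"
  unfolding cond_var_def by (intro integral_nonneg_AE real_cond_exp_pos) auto

text \<open>The gap between the two sides is \<open>E[Var(r - g | F)]\<close>, as \<open>E[r - g | F] = E[r | F]\<close>.\<close>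

lemma integral_cond_var_ge:
  fixes r g :: "'a \<Rightarrow> real"
  assumes rm[measurable]: "r \<in> borel_measurable M" and gm[measurable]: "g \<in> borel_measurable M"
    and r2: "integrable M (\<lambda>x. (r x)\<^sup>2)" and g2: "integrable M (\<lambda>x. (g x)\<^sup>2)"
    and g0: "AE x in M. real_cond_exp M F g x = 0"
  shows "2 * (\<integral>x. r x * g x \<partial>M) - (\<integral>x. (g x)\<^sup>2 \<partial>M) \<le> (\<integral>x. cond_var M F r x \<partial>M)"
proof -
  have r1: "integrable M r" and g1: "integrable M g"
    using square_integrable_imp_integrable rm gm r2 g2 by blast+
  have "AE x in M. real_cond_exp M F (\<lambda>x. r x - g x) x = real_cond_exp M F r x"
    using real_cond_exp_diff[OF r1 g1] g0 by eventually_elim simp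
  then have "(\<integral>x. (real_cond_exp M F (\<lambda>x. r x - g x) x)\<^sup>2 \<partial>M) = (\<integral>x. (real_cond_exp M F r x)\<^sup>2 \<partial>M)"
    by (intro integral_cong_AE) auto
  moreover have "0 \<le> (\<integral>x. cond_var M F (\<lambda>x. r x - g x) x \<partial>M)"
    by (rule integral_cond_var_nonneg) measurable
  ultimately show ?thesis
    using integral_cond_var(2)[OF _ square_integrable_diff(1)[OF rm gm r2 g2]]
      integral_cond_var(2)[OF rm r2] square_integrable_diff(2)[OF rm gm r2 g2]
    by simp
qed

end

section \<open>The observation model\<close>

definition is_policy :: "'x measure \<Rightarrow> (bool \<Rightarrow> 'x \<Rightarrow> real) \<Rightarrow> bool" where
  "is_policy MX pol \<longleftrightarrow> (\<forall>a. pol a \<in> borel_measurable MX)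
     \<and> (\<forall>a. \<forall>x\<in>space MX. 0 \<le> pol a x) \<and> (\<forall>x\<in>space MX. pol True x + pol False x = 1)"

lemma is_policy_pol_det: "is_policy MX (pol_det a)"
  unfolding is_policy_def pol_det_def by auto

lemma is_policyD:
  assumes "is_policy MX pol"
  shows "pol a \<in> borel_measurable MX" "x \<in> space MX \<Longrightarrow> 0 \<le> pol a x"
    "x \<in> space MX \<Longrightarrow> pol True x + pol False x = 1"
  using assms unfolding is_policy_def by auto

lemma ctx_measurable[measurable]: "ctx \<in> base MX \<rightarrow>\<^sub>M MX"
  unfolding ctx_def base_def by measurable

lemma act_measurable[measurable]: "act \<in> base MX \<rightarrow>\<^sub>M count_space UNIV"
  unfolding act_def base_def by measurable

lemma outc_measurable[measurable]: "outc \<in> base MX \<rightarrow>\<^sub>M borel"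
  unfolding outc_def base_def by measurable

lemma joint_dens_Pair[simp]: "joint_dens px py pol ((x, a), y) = py x a y * pol a x * px x"
  by (simp add: joint_dens_def ctx_def act_def outc_def)

locale observation_model =
  fixes MX :: "'x measure" and px :: "'x \<Rightarrow> real" and py :: "'x \<Rightarrow> bool \<Rightarrow> real \<Rightarrow> real"
  assumes sigma_finite_MX: "sigma_finite_measure MX"
    and px_measurable[measurable]: "px \<in> borel_measurable MX"
    and px_nonneg: "\<And>x. x \<in> space MX \<Longrightarrow> 0 \<le> px x"
    and px_nn_integral: "(\<integral>\<^sup>+x. ennreal (px x) \<partial>MX) = 1"
    and py_measurable: "(\<lambda>z. py (ctx z) (act z) (outc z)) \<in> borel_measurable (base MX)"
    and py_nonneg: "\<And>x a y. x \<in> space MX \<Longrightarrow> 0 \<le> py x a y"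
    and py_nn_integral: "\<And>x a. x \<in> space MX \<Longrightarrow> (\<integral>\<^sup>+y. ennreal (py x a y) \<partial>lborel) = 1"
begin

abbreviation XA :: "('x \<times> bool) measure" where
  "XA \<equiv> MX \<Otimes>\<^sub>M count_space UNIV"

sublocale MX: sigma_finite_measure MX
  by (rule sigma_finite_MX)

sublocale XA: pair_sigma_finite MX "count_space (UNIV :: bool set)"
proof -
  interpret A: finite_measure "count_space (UNIV :: bool set)"
    by (rule finite_measure_count_space) simp
  show "pair_sigma_finite MX (count_space (UNIV :: bool set))" ..
qed

sublocale XAY: pair_sigma_finite XA lborel ..

lemma base_eq: "base MX = XA \<Otimes>\<^sub>M lborel"
  unfolding base_def ..

lemma measurable_py[measurable (raw)]:
  assumes "u \<in> N \<rightarrow>\<^sub>M MX" "v \<in> N \<rightarrow>\<^sub>M borel"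
  shows "(\<lambda>t. py (u t) a (v t)) \<in> borel_measurable N"
proof -
  have "(\<lambda>t. ((u t, a), v t)) \<in> N \<rightarrow>\<^sub>M base MX"
    unfolding base_def using assms by measurable
  from measurable_compose[OF this py_measurable] show ?thesis
    by (simp add: ctx_def act_def outc_def)
qed

lemma py_integral: "x \<in> space MX \<Longrightarrow> (\<integral>y. py x a y \<partial>lborel) = 1"
  using py_nn_integral[of x a] py_nonneg[of x a] by (subst integral_eq_nn_integral) auto

lemma integral_count_space_bool:
  fixes G :: "'x \<times> bool \<Rightarrow> real"
  assumes "integrable XA G"
  shows "integral\<^sup>L XA G = (\<integral>x. G (x, True) + G (x, False) \<partial>MX)"
  using XA.integral_fst'[OF assms]
  by (simp add: lebesgue_integral_count_space_finite UNIV_bool add.commute)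

lemma nn_integral_count_space_bool:
  assumes "G \<in> borel_measurable XA"
  shows "integral\<^sup>N XA G = (\<integral>\<^sup>+x. G (x, True) + G (x, False) \<partial>MX)"
  using XA.M2.nn_integral_fst[OF assms]
  by (simp add: nn_integral_count_space_finite UNIV_bool add.commute)

lemma joint_dens_measurable:
  assumes "is_policy MX pol"
  shows "joint_dens px py pol \<in> borel_measurable (base MX)"
proof -
  have [measurable]: "pol a \<in> borel_measurable MX" for a
    using assms by (rule is_policyD)
  show ?thesis
    unfolding joint_dens_def by measurable
qed

lemma joint_dens_nonneg:
  "is_policy MX pol \<Longrightarrow> z \<in> space (base MX) \<Longrightarrow> 0 \<le> joint_dens px py pol z"
  unfolding joint_dens_def base_eq
  by (auto simp: space_pair_measure ctx_def act_def outc_def is_policyD px_nonneg py_nonneg)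

lemma nn_integral_joint_dens:
  assumes pol: "is_policy MX pol"
  shows "(\<integral>\<^sup>+z. ennreal (joint_dens px py pol z) \<partial>base MX) = 1"
proof -
  have [measurable]: "pol a \<in> borel_measurable MX" for a
    using pol by (rule is_policyD)
  have "(\<integral>\<^sup>+z. ennreal (joint_dens px py pol z) \<partial>base MX)
      = (\<integral>\<^sup>+xa. \<integral>\<^sup>+y. ennreal (joint_dens px py pol (xa, y)) \<partial>lborel \<partial>XA)"
    unfolding base_eq by (rule lborel.nn_integral_fst[symmetric]) (simp add: joint_dens_def ctx_def act_def outc_def)
  also have "\<dots> = (\<integral>\<^sup>+xa. ennreal (pol (snd xa) (fst xa) * px (fst xa)) \<partial>XA)"
  proof (rule nn_integral_cong)
    fix xa assume "xa \<in> space XA"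
    then obtain x a where xa: "xa = (x, a)" and x: "x \<in> space MX"
      by (auto simp: space_pair_measure)
    have "(\<integral>\<^sup>+y. ennreal (py x a y * pol a x * px x) \<partial>lborel)
        = (\<integral>\<^sup>+y. ennreal (pol a x * px x) * ennreal (py x a y) \<partial>lborel)"
      using x px_nonneg py_nonneg is_policyD(2)[OF pol]
      by (intro nn_integral_cong) (simp add: ennreal_mult'[symmetric] mult_ac)
    also have "\<dots> = ennreal (pol a x * px x)"
      using x by (subst nn_integral_cmult) (auto simp: py_nn_integral)
    finally show "(\<integral>\<^sup>+y. ennreal (joint_dens px py pol (xa, y)) \<partial>lborel)
        = ennreal (pol (snd xa) (fst xa) * px (fst xa))"
      by (simp add: xa)
  qed
  also have "\<dots> = (\<integral>\<^sup>+x. ennreal (pol True x * px x) + ennreal (pol False x * px x) \<partial>MX)"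
    by (subst nn_integral_count_space_bool) auto
  also have "\<dots> = (\<integral>\<^sup>+x. ennreal (px x) \<partial>MX)"
    using is_policyD(2,3)[OF pol] px_nonneg
    by (intro nn_integral_cong) (simp flip: ennreal_plus distrib_right)
  finally show ?thesis
    using px_nn_integral by simp
qed

lemma prob_space_obs_dist:
  assumes "is_policy MX pol"
  shows "prob_space (obs_dist MX px py pol)"
proof
  have [measurable]: "joint_dens px py pol \<in> borel_measurable (base MX)"
    using assms by (rule joint_dens_measurable)
  show "emeasure (obs_dist MX px py pol) (space (obs_dist MX px py pol)) = 1"
    unfolding obs_dist_def using nn_integral_joint_dens[OF assms]
    by (simp add: emeasure_density)
qed

lemma AE_integrable_joint_dens:
  assumes pol: "is_policy MX pol"
  shows "AE y in lborel. integrable XA (\<lambda>xa. joint_dens px py pol (xa, y))"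
proof -
  have "integrable (base MX) (joint_dens px py pol)"
    using nn_integral_joint_dens[OF pol] joint_dens_nonneg[OF pol] joint_dens_measurable[OF pol]
    by (intro integrableI_nonneg) auto
  then show ?thesis
    unfolding base_eq using XAY.AE_integrable_snd[of "\<lambda>xa y. joint_dens px py pol (xa, y)"]
    by simp
qed

lemma marg_Y_eq_integral:
  assumes "integrable XA (\<lambda>xa. joint_dens px py pol (xa, y))"
  shows "marg_Y MX px py pol y = (\<integral>xa. joint_dens px py pol (xa, y) \<partial>XA)"
  unfolding marg_Y_def integral_count_space_bool[OF assms]
  by (simp add: UNIV_bool add.commute)

lemma marg_Y_measurable:
  assumes "is_policy MX pol"
  shows "marg_Y MX px py pol \<in> borel_measurable borel"
proof -
  have [measurable]: "pol a \<in> borel_measurable MX" for a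
    using assms by (rule is_policyD)
  show ?thesis
    unfolding marg_Y_def by (rule MX.borel_measurable_lebesgue_integral) (simp add: UNIV_bool)
qed

lemma w_ATE_measurable:
  "is_policy MX pol \<Longrightarrow> w_ATE MX px py pol \<in> borel_measurable borel"
  unfolding w_ATE_def using marg_Y_measurable is_policy_pol_det by measurable

end

section \<open>Observations under the behaviour policy\<close>

locale behaviour_model = observation_model MX px py
  for MX :: "'x measure" and px py +
  fixes pib :: "bool \<Rightarrow> 'x \<Rightarrow> real"
  assumes pib_policy: "is_policy MX pib"
    and pib_pos: "\<And>a x. x \<in> space MX \<Longrightarrow> 0 < pib a x"
begin

abbreviation M :: "'x obs measure" where
  "M \<equiv> obs_dist MX px py pib"

abbreviation J :: "'x obs \<Rightarrow> real" where
  "J \<equiv> joint_dens px py pib"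

lemma pib_measurable[measurable]: "pib a \<in> borel_measurable MX"
  using pib_policy by (rule is_policyD)

lemma pib_sum: "x \<in> space MX \<Longrightarrow> pib True x + pib False x = 1"
  using pib_policy by (rule is_policyD)

lemma pib_nonzero: "x \<in> space MX \<Longrightarrow> pib a x \<noteq> 0"
  using pib_pos[of x a] by simp

sublocale M: prob_space M
  using pib_policy by (rule prob_space_obs_dist)

lemma sets_M[measurable_cong]: "sets M = sets (base MX)"
  unfolding obs_dist_def by simp

lemma rho_ATE_measurable[measurable]: "rho_ATE pib a \<in> borel_measurable MX"
  unfolding rho_ATE_def by measurable

lemma mu_reg_measurable[measurable]: "mu_reg py a \<in> borel_measurable MX"
  unfolding mu_reg_def by (rule lborel.borel_measurable_lebesgue_integral) simp

lemmas w_ATE_pib_measurable[measurable] = w_ATE_measurable[OF pib_policy]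

lemma integral_M_density:
  assumes "integrable M F"
  shows "integrable (base MX) (\<lambda>z. J z * F z)"
    and "integral\<^sup>L M F = (\<integral>z. J z * F z \<partial>base MX)"
proof -
  have [measurable]: "J \<in> borel_measurable (base MX)"
    using pib_policy by (rule joint_dens_measurable)
  have [measurable]: "F \<in> borel_measurable (base MX)"
    using borel_measurable_integrable[OF assms] by (simp only: measurable_cong_sets[OF sets_M refl])
  have J_nonneg: "AE z in base MX. 0 \<le> J z"
    using joint_dens_nonneg[OF pib_policy] by (intro AE_I2) auto
  show "integrable (base MX) (\<lambda>z. J z * F z)"
    using assms J_nonneg unfolding obs_dist_def by (subst (asm) integrable_density) auto
  show "integral\<^sup>L M F = (\<integral>z. J z * F z \<partial>base MX)"
    using J_nonneg unfolding obs_dist_def by (subst integral_density) auto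
qed

lemma integral_M_ctx_act_outer:
  assumes "integrable M F"
  shows "integral\<^sup>L M F = (\<integral>x. (\<integral>y. J ((x, True), y) * F ((x, True), y) \<partial>lborel)
                               + (\<integral>y. J ((x, False), y) * F ((x, False), y) \<partial>lborel) \<partial>MX)"
proof -
  note JF = integral_M_density[OF assms, unfolded base_eq]
  have "integral\<^sup>L M F = (\<integral>xa. (\<integral>y. J (xa, y) * F (xa, y) \<partial>lborel) \<partial>XA)"
    using JF XAY.integral_fst'[OF JF(1)] by simp
  also have "\<dots> = (\<integral>x. (\<integral>y. J ((x, True), y) * F ((x, True), y) \<partial>lborel)
                    + (\<integral>y. J ((x, False), y) * F ((x, False), y) \<partial>lborel) \<partial>MX)"
    using XAY.integrable_fst'[OF JF(1)] by (subst integral_count_space_bool) auto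
  finally show ?thesis .
qed

lemma integral_M_outc_outer:
  assumes "integrable M F"
  shows "integral\<^sup>L M F = (\<integral>y. (\<integral>xa. J (xa, y) * F (xa, y) \<partial>XA) \<partial>lborel)"
proof -
  note JF = integral_M_density[OF assms, unfolded base_eq]
  show ?thesis
    using JF XAY.integral_snd[of "\<lambda>xa y. J (xa, y) * F (xa, y)"] by (simp add: case_prod_unfold)
qed

lemma integral_act_ctx:
  assumes "integrable M (\<lambda>z. H (act z) (ctx z))"
  shows "(\<integral>z. H (act z) (ctx z) \<partial>M)
           = (\<integral>x. px x * (pib True x * H True x + pib False x * H False x) \<partial>MX)"
  unfolding integral_M_ctx_act_outer[OF assms]
proof (rule Bochner_Integration.integral_cong[OF refl])
  fix x assume x: "x \<in> space MX"
  have inner: "(\<integral>y. J ((x, a), y) * H (act ((x, a), y)) (ctx ((x, a), y)) \<partial>lborel)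
      = px x * (pib a x * H a x)" for a
  proof -
    have "(\<integral>y. J ((x, a), y) * H (act ((x, a), y)) (ctx ((x, a), y)) \<partial>lborel)
        = (\<integral>y. (px x * pib a x * H a x) * py x a y \<partial>lborel)"
      by (simp add: act_def ctx_def mult_ac)
    then show ?thesis
      using py_integral[OF x, of a] by simp
  qed
  show "(\<integral>y. J ((x, True), y) * H (act ((x, True), y)) (ctx ((x, True), y)) \<partial>lborel)
      + (\<integral>y. J ((x, False), y) * H (act ((x, False), y)) (ctx ((x, False), y)) \<partial>lborel)
      = px x * (pib True x * H True x + pib False x * H False x)"
    unfolding inner by (simp add: distrib_left)
qed

lemma integral_act_ctx_outc:
  assumes "integrable M (\<lambda>z. H (act z) (ctx z) * outc z)"
  shows "(\<integral>z. H (act z) (ctx z) * outc z \<partial>M)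
           = (\<integral>x. px x * (pib True x * (H True x * mu_reg py True x)
                            + pib False x * (H False x * mu_reg py False x)) \<partial>MX)"
  unfolding integral_M_ctx_act_outer[OF assms]
proof (rule Bochner_Integration.integral_cong[OF refl])
  fix x
  have inner: "(\<integral>y. J ((x, a), y) * (H (act ((x, a), y)) (ctx ((x, a), y)) * outc ((x, a), y)) \<partial>lborel)
      = px x * (pib a x * (H a x * mu_reg py a x))" for a
  proof -
    have "(\<integral>y. J ((x, a), y) * (H (act ((x, a), y)) (ctx ((x, a), y)) * outc ((x, a), y)) \<partial>lborel)
        = (\<integral>y. (px x * pib a x * H a x) * (y * py x a y) \<partial>lborel)"
      by (simp add: act_def ctx_def outc_def mult_ac)
    also have "\<dots> = (px x * pib a x * H a x) * mu_reg py a x"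
      unfolding mu_reg_def by (rule integral_mult_right_zero)
    finally show ?thesis
      by (simp add: mult_ac)
  qed
  show "(\<integral>y. J ((x, True), y) * (H (act ((x, True), y)) (ctx ((x, True), y)) * outc ((x, True), y)) \<partial>lborel)
      + (\<integral>y. J ((x, False), y) * (H (act ((x, False), y)) (ctx ((x, False), y)) * outc ((x, False), y)) \<partial>lborel)
      = px x * (pib True x * (H True x * mu_reg py True x) + pib False x * (H False x * mu_reg py False x))"
    unfolding inner by (simp add: distrib_left)
qed

lemma integral_outc_eq_mu_reg:
  assumes "integrable M (\<lambda>z. H (act z) (ctx z) * outc z)"
    and "integrable M (\<lambda>z. H (act z) (ctx z) * mu_reg py (act z) (ctx z))"
  shows "(\<integral>z. H (act z) (ctx z) * outc z \<partial>M) = (\<integral>z. H (act z) (ctx z) * mu_reg py (act z) (ctx z) \<partial>M)"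
  using integral_act_ctx_outc[OF assms(1)] integral_act_ctx[OF assms(2)] by simp

text \<open>
  Both sides equal \<open>p\<^bsub>\<pi>(1)\<^esub>(y) - p\<^bsub>\<pi>(0)\<^esub>(y)\<close>. Where \<open>p\<^bsub>\<pi>b\<^esub>(y) = 0\<close>, so that
  \<open>w_ATE\<close> takes the junk value of a division by zero, positivity of \<open>\<pi>\<^sup>b\<close> forces both
  marginals to vanish as well.
\<close>

lemma integral_joint_dens_rho_ATE:
  "AE y in lborel. (\<integral>xa. J (xa, y) * rho_ATE pib (snd xa) (fst xa) \<partial>XA)
                     = w_ATE MX px py pib y * (\<integral>xa. J (xa, y) \<partial>XA)"
  using AE_integrable_joint_dens[OF pib_policy]
    AE_integrable_joint_dens[OF is_policy_pol_det[of MX True]]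
    AE_integrable_joint_dens[OF is_policy_pol_det[of MX False]]
proof eventually_elim
  fix y
  let ?J = "\<lambda>a xa. joint_dens px py (pol_det a) (xa, y)"
  assume Jb: "integrable XA (\<lambda>xa. J (xa, y))"
    and J1: "integrable XA (?J True)" and J0: "integrable XA (?J False)"
  have "(\<integral>xa. J (xa, y) * rho_ATE pib (snd xa) (fst xa) \<partial>XA) = (\<integral>xa. ?J True xa - ?J False xa \<partial>XA)"
    by (intro Bochner_Integration.integral_cong refl)
      (auto simp: space_pair_measure rho_ATE_def pol_det_def pib_nonzero)
  also have "\<dots> = marg_Y MX px py (pol_det True) y - marg_Y MX px py (pol_det False) y"
    using J1 J0 by (simp add: marg_Y_eq_integral)
  finally have q1: "(\<integral>xa. J (xa, y) * rho_ATE pib (snd xa) (fst xa) \<partial>XA)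
      = marg_Y MX px py (pol_det True) y - marg_Y MX px py (pol_det False) y" .
  have q0: "(\<integral>xa. J (xa, y) \<partial>XA) = marg_Y MX px py pib y"
    using Jb by (simp add: marg_Y_eq_integral)
  show "(\<integral>xa. J (xa, y) * rho_ATE pib (snd xa) (fst xa) \<partial>XA) = w_ATE MX px py pib y * (\<integral>xa. J (xa, y) \<partial>XA)"
  proof (cases "marg_Y MX px py pib y = 0")
    case False
    then show ?thesis
      unfolding q0 q1 w_ATE_def by simp
  next
    case True
    have J_nonneg: "xa \<in> space XA \<Longrightarrow> 0 \<le> J (xa, y)" for xa
      using joint_dens_nonneg[OF pib_policy, of "(xa, y)"] by (simp add: base_eq space_pair_measure)
    have "AE xa in XA. J (xa, y) = 0"
      using integral_nonneg_eq_0_iff_AE[OF Jb] J_nonneg q0 True by auto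
    then have "AE xa in XA. ?J a xa = 0" for a
      using AE_space by eventually_elim (auto simp: space_pair_measure pol_det_def pib_nonzero)
    then have "marg_Y MX px py (pol_det a) y = 0" for a
      using J1 J0 by (cases a) (auto simp: marg_Y_eq_integral intro: integral_eq_zero_AE)
    then show ?thesis
      unfolding q0 q1 True by simp
  qed
qed

lemma integral_outc_rho_ATE_eq_w_ATE:
  fixes h :: "real \<Rightarrow> real"
  assumes [measurable]: "h \<in> borel_measurable borel"
    and "integrable M (\<lambda>z. h (outc z) * rho_ATE pib (act z) (ctx z))"
    and "integrable M (\<lambda>z. h (outc z) * w_ATE MX px py pib (outc z))"
  shows "(\<integral>z. h (outc z) * rho_ATE pib (act z) (ctx z) \<partial>M)
           = (\<integral>z. h (outc z) * w_ATE MX px py pib (outc z) \<partial>M)"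
proof -
  let ?w = "w_ATE MX px py pib"
  have [measurable]: "(\<lambda>y. \<integral>xa. J (xa, y) * F xa \<partial>XA) \<in> borel_measurable borel"
    if [measurable]: "F \<in> borel_measurable XA" for F
    by (rule XA.borel_measurable_lebesgue_integral) (simp add: joint_dens_def ctx_def act_def outc_def)
  have [measurable]: "(\<lambda>y. \<integral>xa. J (xa, y) \<partial>XA) \<in> borel_measurable borel"
    by (rule XA.borel_measurable_lebesgue_integral) (simp add: joint_dens_def ctx_def act_def outc_def)
  have "(\<integral>z. h (outc z) * rho_ATE pib (act z) (ctx z) \<partial>M)
      = (\<integral>y. h y * (\<integral>xa. J (xa, y) * rho_ATE pib (snd xa) (fst xa) \<partial>XA) \<partial>lborel)"
    unfolding integral_M_outc_outer[OF assms(2)]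
    by (simp add: act_def ctx_def outc_def mult.left_commute)
  also have "\<dots> = (\<integral>y. h y * (?w y * (\<integral>xa. J (xa, y) \<partial>XA)) \<partial>lborel)"
  proof (rule integral_cong_AE)
    show "AE y in lborel. h y * (\<integral>xa. J (xa, y) * rho_ATE pib (snd xa) (fst xa) \<partial>XA)
        = h y * (?w y * (\<integral>xa. J (xa, y) \<partial>XA))"
      using integral_joint_dens_rho_ATE by eventually_elim simp
  qed measurable
  also have "\<dots> = (\<integral>z. h (outc z) * ?w (outc z) \<partial>M)"
    unfolding integral_M_outc_outer[OF assms(3)]
    by (simp add: act_def ctx_def outc_def mult_ac)
  finally show ?thesis .
qed

lemma finite_measure_subalgebra_sigma_Y: "finite_measure_subalgebra M (sigma_Y M)"
  unfolding sigma_Y_def by (rule M.finite_measure_subalgebra_vimage_algebra) measurable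

lemma finite_measure_subalgebra_sigma_X: "finite_measure_subalgebra M (sigma_X MX M)"
  unfolding sigma_X_def by (rule M.finite_measure_subalgebra_vimage_algebra) measurable

lemma real_cond_exp_rho_ATE_outc:
  assumes "integrable M (\<lambda>z. rho_ATE pib (act z) (ctx z) * outc z)"
    and "integrable M (\<lambda>z. w_ATE MX px py pib (outc z) * outc z)"
  shows "AE z in M. real_cond_exp M (sigma_Y M) (\<lambda>z. rho_ATE pib (act z) (ctx z) * outc z) z
                     = w_ATE MX px py pib (outc z) * outc z"
proof -
  interpret Y: finite_measure_subalgebra M "sigma_Y M"
    by (rule finite_measure_subalgebra_sigma_Y)
  have outc_Y: "outc \<in> sigma_Y M \<rightarrow>\<^sub>M borel"
    unfolding sigma_Y_def by (rule measurable_vimage_algebra1) simp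
  show ?thesis
  proof (rule Y.real_cond_exp_charact[OF _ assms])
    show "(\<lambda>z. w_ATE MX px py pib (outc z) * outc z) \<in> borel_measurable (sigma_Y M)"
      using outc_Y by measurable
    fix A assume "A \<in> sets (sigma_Y M)"
    then obtain S where S[measurable]: "S \<in> sets borel" and A: "A = outc -` S \<inter> space M"
      unfolding sigma_Y_def by (auto simp: sets_vimage_algebra2)
    have outc_M: "outc \<in> M \<rightarrow>\<^sub>M borel"
      by measurable
    have reorder: "(\<lambda>z. indicator S (outc z) * (F z * outc z)) = (\<lambda>z. (indicator S (outc z) * outc z) * F z)"
      for F :: "'x obs \<Rightarrow> real"
      by (simp add: mult_ac)
    have ints: "integrable M (\<lambda>z. (indicator S (outc z) * outc z) * rho_ATE pib (act z) (ctx z))"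
      "integrable M (\<lambda>z. (indicator S (outc z) * outc z) * w_ATE MX px py pib (outc z))"
      using integrable_indicator_comp[OF assms(1) outc_M S] integrable_indicator_comp[OF assms(2) outc_M S]
      unfolding reorder .
    show "(\<integral>z\<in>A. rho_ATE pib (act z) (ctx z) * outc z \<partial>M)
        = (\<integral>z\<in>A. w_ATE MX px py pib (outc z) * outc z \<partial>M)"
      unfolding A set_integral_indicator_comp reorder
      by (rule integral_outc_rho_ATE_eq_w_ATE[OF _ ints]) measurable
  qed
qed

lemma integral_cond_var_sigma_Y:
  assumes "integrable M (\<lambda>z. (rho_ATE pib (act z) (ctx z) * outc z)\<^sup>2)"
    and "integrable M (\<lambda>z. (w_ATE MX px py pib (outc z) * outc z)\<^sup>2)"
  shows "integrable M (cond_var M (sigma_Y M) (\<lambda>z. rho_ATE pib (act z) (ctx z) * outc z))"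
    and "(\<integral>z. cond_var M (sigma_Y M) (\<lambda>z. rho_ATE pib (act z) (ctx z) * outc z) z \<partial>M)
           = (\<integral>z. (rho_ATE pib (act z) (ctx z) * outc z)\<^sup>2 \<partial>M)
             - (\<integral>z. (w_ATE MX px py pib (outc z) * outc z)\<^sup>2 \<partial>M)"
    and "(\<integral>z. w_ATE MX px py pib (outc z) * outc z \<partial>M) = (\<integral>z. rho_ATE pib (act z) (ctx z) * outc z \<partial>M)"
proof -
  interpret Y: finite_measure_subalgebra M "sigma_Y M"
    by (rule finite_measure_subalgebra_sigma_Y)
  let ?f = "\<lambda>z. rho_ATE pib (act z) (ctx z) * outc z"
  let ?W = "\<lambda>z. w_ATE MX px py pib (outc z) * outc z"
  have [measurable]: "?f \<in> borel_measurable M" "?W \<in> borel_measurable M"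
    by measurable
  have f1: "integrable M ?f" and W1: "integrable M ?W"
    by (rule M.square_integrable_imp_integrable[OF _ assms(1)] M.square_integrable_imp_integrable[OF _ assms(2)],
        measurable)+
  have cond: "AE z in M. real_cond_exp M (sigma_Y M) ?f z = ?W z"
    using f1 W1 by (rule real_cond_exp_rho_ATE_outc)
  show "integrable M (cond_var M (sigma_Y M) ?f)"
    by (rule Y.integral_cond_var(1)[OF _ assms(1)]) measurable
  have "(\<integral>z. (real_cond_exp M (sigma_Y M) ?f z)\<^sup>2 \<partial>M) = (\<integral>z. (?W z)\<^sup>2 \<partial>M)"
    using cond by (intro integral_cong_AE) auto
  then show "(\<integral>z. cond_var M (sigma_Y M) ?f z \<partial>M) = (\<integral>z. (?f z)\<^sup>2 \<partial>M) - (\<integral>z. (?W z)\<^sup>2 \<partial>M)"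
    using Y.integral_cond_var(2)[OF _ assms(1)] by simp
  have "(\<integral>z. ?W z \<partial>M) = (\<integral>z. real_cond_exp M (sigma_Y M) ?f z \<partial>M)"
    using cond by (intro integral_cong_AE) auto
  then show "(\<integral>z. ?W z \<partial>M) = (\<integral>z. ?f z \<partial>M)"
    using Y.real_cond_exp_int(2)[OF f1] by simp
qed

lemma pib_weighted_DR_correction:
  assumes "x \<in> space MX"
  shows "pib True x * (rho_ATE pib True x * muh True x - (muh True x - muh False x))
       + pib False x * (rho_ATE pib False x * muh False x - (muh True x - muh False x)) = 0"
proof -
  have "pib True x * rho_ATE pib True x = 1" "pib False x * rho_ATE pib False x = -1"
    using pib_nonzero[OF assms] by (simp_all add: rho_ATE_def)
  then have "pib True x * (rho_ATE pib True x * muh True x - (muh True x - muh False x))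
       + pib False x * (rho_ATE pib False x * muh False x - (muh True x - muh False x))
     = (1 - (pib True x + pib False x)) * (muh True x - muh False x)"
    by (simp add: algebra_simps flip: mult.assoc)
  then show ?thesis
    using pib_sum[OF assms] by simp
qed

lemma real_cond_exp_DR_correction:
  assumes [measurable]: "\<And>a. muh a \<in> borel_measurable MX"
    and int: "integrable M (\<lambda>z. rho_ATE pib (act z) (ctx z) * muh (act z) (ctx z) - (muh True (ctx z) - muh False (ctx z)))"
  shows "AE z in M. real_cond_exp M (sigma_X MX M)
           (\<lambda>z. rho_ATE pib (act z) (ctx z) * muh (act z) (ctx z) - (muh True (ctx z) - muh False (ctx z))) z = 0"
proof -
  interpret X: finite_measure_subalgebra M "sigma_X MX M"
    by (rule finite_measure_subalgebra_sigma_X)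
  define G where "G a x = rho_ATE pib a x * muh a x - (muh True x - muh False x)" for a x
  have [measurable]: "G a \<in> borel_measurable MX" for a
    unfolding G_def by measurable
  have ctx_M: "ctx \<in> M \<rightarrow>\<^sub>M MX"
    by measurable
  show ?thesis
  proof (rule X.real_cond_exp_charact[OF _ int])
    fix A assume "A \<in> sets (sigma_X MX M)"
    then obtain S where S[measurable]: "S \<in> sets MX" and A: "A = ctx -` S \<inter> space M"
      unfolding sigma_X_def using measurable_space[OF ctx_M] by (auto simp: sets_vimage_algebra2)
    have int_S: "integrable M (\<lambda>z. indicator S (ctx z) * G (act z) (ctx z))"
      using integrable_indicator_comp[OF int ctx_M S] by (simp add: G_def)
    have "(\<integral>z\<in>A. G (act z) (ctx z) \<partial>M) = (\<integral>z. indicator S (ctx z) * G (act z) (ctx z) \<partial>M)"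
      unfolding A by (rule set_integral_indicator_comp)
    also have "\<dots> = (\<integral>x. px x * (pib True x * (indicator S x * G True x)
                                    + pib False x * (indicator S x * G False x)) \<partial>MX)"
      by (rule integral_act_ctx[OF int_S])
    also have "\<dots> = (\<integral>x. px x * indicator S x * (pib True x * G True x + pib False x * G False x) \<partial>MX)"
      by (intro Bochner_Integration.integral_cong refl) (simp add: algebra_simps)
    also have "\<dots> = 0"
      using pib_weighted_DR_correction[of _ muh]
      by (intro integral_eq_zero_AE AE_I2) (simp add: G_def)
    finally show "(\<integral>z\<in>A. rho_ATE pib (act z) (ctx z) * muh (act z) (ctx z)
        - (muh True (ctx z) - muh False (ctx z)) \<partial>M) = (\<integral>z\<in>A. 0 \<partial>M)"
      by (simp add: G_def)
  qed simp_all
qed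

lemma square_integrable_DR_correction:
  assumes [measurable]: "\<And>a. muh a \<in> borel_measurable MX"
    and "integrable M (\<lambda>z. (rho_ATE pib (act z) (ctx z) * muh (act z) (ctx z))\<^sup>2)"
    and "\<And>a. integrable M (\<lambda>z. (muh a (ctx z))\<^sup>2)"
  shows "integrable M (\<lambda>z. (rho_ATE pib (act z) (ctx z) * muh (act z) (ctx z)
                              - (muh True (ctx z) - muh False (ctx z)))\<^sup>2)"
proof (rule square_integrable_diff(1))
  show "integrable M (\<lambda>z. (muh True (ctx z) - muh False (ctx z))\<^sup>2)"
    using assms(3) by (intro square_integrable_diff(1)) auto
qed (use assms(2) in auto)

lemma Var_DR_summand_minus_Var_MR_summand_ge:
  assumes [measurable]: "\<And>a. muh a \<in> borel_measurable MX"
    and sq1: "integrable M (\<lambda>z. (rho_ATE pib (act z) (ctx z) * outc z)\<^sup>2)"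
    and sq2: "integrable M (\<lambda>z. (rho_ATE pib (act z) (ctx z) * muh (act z) (ctx z))\<^sup>2)"
    and sq3: "\<And>a. integrable M (\<lambda>z. (muh a (ctx z))\<^sup>2)"
    and sq4: "integrable M (\<lambda>z. (w_ATE MX px py pib (outc z) * outc z)\<^sup>2)"
    and sq5: "integrable M (\<lambda>z. (rho_ATE pib (act z) (ctx z) * mu_reg py (act z) (ctx z))\<^sup>2)"
  shows "Var M (\<lambda>z. rho_ATE pib (act z) (ctx z) * (outc z - muh (act z) (ctx z))
                    + (muh True (ctx z) - muh False (ctx z)))
         - Var M (\<lambda>z. w_ATE MX px py pib (outc z) * outc z)
         \<ge> (\<integral>z. cond_var M (sigma_Y M) (\<lambda>z. rho_ATE pib (act z) (ctx z) * outc z) z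
              - cond_var M (sigma_X MX M) (\<lambda>z. rho_ATE pib (act z) (ctx z) * mu_reg py (act z) (ctx z)) z \<partial>M)"
proof -
  interpret X: finite_measure_subalgebra M "sigma_X MX M"
    by (rule finite_measure_subalgebra_sigma_X)
  define f where "f z = rho_ATE pib (act z) (ctx z) * outc z" for z
  define g where "g z = rho_ATE pib (act z) (ctx z) * muh (act z) (ctx z)
    - (muh True (ctx z) - muh False (ctx z))" for z
  define r where "r z = rho_ATE pib (act z) (ctx z) * mu_reg py (act z) (ctx z)" for z
  define W where "W z = w_ATE MX px py pib (outc z) * outc z" for z :: "'x obs"
  have fm[measurable]: "f \<in> borel_measurable M" and gm[measurable]: "g \<in> borel_measurable M"
    and rm[measurable]: "r \<in> borel_measurable M" and Wm[measurable]: "W \<in> borel_measurable M"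
    unfolding f_def g_def r_def W_def by measurable
  have f2: "integrable M (\<lambda>z. (f z)\<^sup>2)" and g2: "integrable M (\<lambda>z. (g z)\<^sup>2)"
    and r2: "integrable M (\<lambda>z. (r z)\<^sup>2)" and W2: "integrable M (\<lambda>z. (W z)\<^sup>2)"
    unfolding f_def g_def r_def W_def using sq1 square_integrable_DR_correction[OF _ sq2 sq3] sq5 sq4
    by auto
  have g1: "integrable M g"
    using M.square_integrable_imp_integrable[OF gm g2] .
  have cond_g: "AE z in M. real_cond_exp M (sigma_X MX M) g z = 0"
    using real_cond_exp_DR_correction[OF _ g1[unfolded g_def]] unfolding g_def by simp
  have Eg: "(\<integral>z. g z \<partial>M) = 0"
    using X.real_cond_exp_int(2)[OF g1] integral_cong_AE[OF _ _ cond_g] by simp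
  have Efg: "(\<integral>z. f z * g z \<partial>M) = (\<integral>z. r z * g z \<partial>M)"
  proof -
    let ?H = "\<lambda>a x. rho_ATE pib a x * (rho_ATE pib a x * muh a x - (muh True x - muh False x))"
    have fg: "(\<lambda>z. f z * g z) = (\<lambda>z. ?H (act z) (ctx z) * outc z)"
      and rg: "(\<lambda>z. r z * g z) = (\<lambda>z. ?H (act z) (ctx z) * mu_reg py (act z) (ctx z))"
      by (simp_all add: fun_eq_iff f_def g_def r_def mult_ac)
    show ?thesis
      using integrable_mult_of_square_integrable[OF fm gm f2 g2]
        integrable_mult_of_square_integrable[OF rm gm r2 g2]
      unfolding fg rg by (rule integral_outc_eq_mu_reg)
  qed
  have VD: "Var M (\<lambda>z. f z - g z) = (\<integral>z. (f z)\<^sup>2 \<partial>M) - 2 * (\<integral>z. f z * g z \<partial>M)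
      + (\<integral>z. (g z)\<^sup>2 \<partial>M) - (\<integral>z. f z \<partial>M)\<^sup>2"
    using M.Var_diff[OF fm gm f2 g2] Eg by simp
  have VW: "Var M W = (\<integral>z. (W z)\<^sup>2 \<partial>M) - (\<integral>z. f z \<partial>M)\<^sup>2"
    using M.Var_eq[OF Wm W2] integral_cond_var_sigma_Y(3)[OF sq1 sq4] unfolding W_def f_def by simp
  have CY: "(\<integral>z. cond_var M (sigma_Y M) f z \<partial>M) = (\<integral>z. (f z)\<^sup>2 \<partial>M) - (\<integral>z. (W z)\<^sup>2 \<partial>M)"
    using integral_cond_var_sigma_Y(2)[OF sq1 sq4] unfolding f_def W_def .
  have CX: "2 * (\<integral>z. r z * g z \<partial>M) - (\<integral>z. (g z)\<^sup>2 \<partial>M) \<le> (\<integral>z. cond_var M (sigma_X MX M) r z \<partial>M)"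
    by (rule X.integral_cond_var_ge[OF rm gm r2 g2 cond_g])
  have RHS: "(\<integral>z. cond_var M (sigma_Y M) (\<lambda>z. rho_ATE pib (act z) (ctx z) * outc z) z
        - cond_var M (sigma_X MX M) (\<lambda>z. rho_ATE pib (act z) (ctx z) * mu_reg py (act z) (ctx z)) z \<partial>M)
      = (\<integral>z. cond_var M (sigma_Y M) f z \<partial>M) - (\<integral>z. cond_var M (sigma_X MX M) r z \<partial>M)"
    using integral_cond_var_sigma_Y(1)[OF sq1 sq4] X.integral_cond_var(1)[OF rm r2]
    unfolding f_def r_def by simp
  have DR: "(\<lambda>z. rho_ATE pib (act z) (ctx z) * (outc z - muh (act z) (ctx z))
      + (muh True (ctx z) - muh False (ctx z))) = (\<lambda>z. f z - g z)"
    by (simp add: fun_eq_iff f_def g_def algebra_simps)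
  show ?thesis
    unfolding DR RHS W_def[symmetric] using VD VW CY CX Efg by linarith
qed

lemma Var_ATE_DR:
  assumes [measurable]: "\<And>a. muh a \<in> borel_measurable MX"
    and "integrable M (\<lambda>z. (rho_ATE pib (act z) (ctx z) * outc z)\<^sup>2)"
    and "integrable M (\<lambda>z. (rho_ATE pib (act z) (ctx z) * muh (act z) (ctx z))\<^sup>2)"
    and "\<And>a. integrable M (\<lambda>z. (muh a (ctx z))\<^sup>2)"
    and "n > 0"
  shows "Var (sample_dist n M) (ATE_DR n pib muh)
           = Var M (\<lambda>z. rho_ATE pib (act z) (ctx z) * (outc z - muh (act z) (ctx z))
                        + (muh True (ctx z) - muh False (ctx z))) / real n"
proof -
  define D where "D z = rho_ATE pib (act z) (ctx z) * (outc z - muh (act z) (ctx z))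
    + (muh True (ctx z) - muh False (ctx z))" for z :: "'x obs"
  have "ATE_DR n pib muh = (\<lambda>s. (1 / real n) * (\<Sum>i<n. D (s i)))"
    unfolding ATE_DR_def D_def by (simp add: sum.distrib distrib_left)
  moreover have "D = (\<lambda>z. rho_ATE pib (act z) (ctx z) * outc z - (rho_ATE pib (act z) (ctx z)
      * muh (act z) (ctx z) - (muh True (ctx z) - muh False (ctx z))))"
    by (simp add: fun_eq_iff D_def algebra_simps)
  then have "integrable M (\<lambda>z. (D z)\<^sup>2)"
    using square_integrable_diff(1)[OF _ _ assms(2) square_integrable_DR_correction[OF assms(1,3,4)]]
    by simp
  moreover have "D \<in> borel_measurable M"
    unfolding D_def by measurable
  ultimately show ?thesis
    unfolding sample_dist_def D_def[symmetric] using M.Var_sample_mean assms(5) by simp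
qed

lemma Var_ATE_MR:
  assumes "integrable M (\<lambda>z. (w_ATE MX px py pib (outc z) * outc z)\<^sup>2)" and "n > 0"
  shows "Var (sample_dist n M) (ATE_MR n (w_ATE MX px py pib))
           = Var M (\<lambda>z. w_ATE MX px py pib (outc z) * outc z) / real n"
  unfolding ATE_MR_def sample_dist_def by (rule M.Var_sample_mean[OF _ assms]) measurable
end

theorem propositionA6:
  fixes MX :: "'x measure"
    and px :: "'x \<Rightarrow> real"
    and py :: "'x \<Rightarrow> bool \<Rightarrow> real \<Rightarrow> real"
    and pib :: "bool \<Rightarrow> 'x \<Rightarrow> real"
    and muh :: "bool \<Rightarrow> 'x \<Rightarrow> real"
    and n :: nat
  defines "M \<equiv> obs_dist MX px py pib"
  assumes MX: "sigma_finite_measure MX"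
    and px_meas: "px \<in> borel_measurable MX"
    and px_nonneg: "\<And>x. x \<in> space MX \<Longrightarrow> px x \<ge> 0"
    and px_int: "(\<integral>\<^sup>+x. ennreal (px x) \<partial>MX) = 1"
    and py_meas: "(\<lambda>z. py (ctx z) (act z) (outc z)) \<in> borel_measurable (base MX)"
    and py_nonneg: "\<And>x a y. x \<in> space MX \<Longrightarrow> py x a y \<ge> 0"
    and py_int: "\<And>x a. x \<in> space MX \<Longrightarrow> (\<integral>\<^sup>+y. ennreal (py x a y) \<partial>lborel) = 1"
    and pib_meas: "\<And>a. pib a \<in> borel_measurable MX"
    and pib_pos: "\<And>a x. x \<in> space MX \<Longrightarrow> pib a x > 0"
    and pib_sum: "\<And>x. x \<in> space MX \<Longrightarrow> pib True x + pib False x = 1"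
    and muh_meas: "\<And>a. muh a \<in> borel_measurable MX"
    and n_pos: "n > 0"
    and sq1: "integrable M (\<lambda>z. (rho_ATE pib (act z) (ctx z) * outc z)\<^sup>2)"
    and sq2: "integrable M (\<lambda>z. (rho_ATE pib (act z) (ctx z) * muh (act z) (ctx z))\<^sup>2)"
    and sq3: "\<And>a. integrable M (\<lambda>z. (muh a (ctx z))\<^sup>2)"
    and sq4: "integrable M (\<lambda>z. (w_ATE MX px py pib (outc z) * outc z)\<^sup>2)"
    and sq5: "integrable M (\<lambda>z. (rho_ATE pib (act z) (ctx z) * mu_reg py (act z) (ctx z))\<^sup>2)"
  shows "Var (sample_dist n M) (ATE_DR n pib muh)
           - Var (sample_dist n M) (ATE_MR n (w_ATE MX px py pib))
         \<ge> (1 / real n) *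
           (\<integral>z. cond_var M (sigma_Y M) (\<lambda>z. rho_ATE pib (act z) (ctx z) * outc z) z
                - cond_var M (sigma_X MX M) (\<lambda>z. rho_ATE pib (act z) (ctx z) * mu_reg py (act z) (ctx z)) z \<partial>M)"
proof -
  have "is_policy MX pib"
    unfolding is_policy_def using pib_meas pib_pos pib_sum by (simp add: less_imp_le)
  interpret behaviour_model MX px py pib
    by (rule behaviour_model.intro[OF observation_model.intro behaviour_model_axioms.intro])
      (fact MX px_meas px_nonneg px_int py_meas py_nonneg py_int \<open>is_policy MX pib\<close> pib_pos)+
  note sq = sq1 sq2 sq3 sq4 sq5
  note sq_obs = sq[unfolded M_def]
  show ?thesis
    unfolding M_def Var_ATE_DR[OF muh_meas sq_obs(1-3) n_pos] Var_ATE_MR[OF sq_obs(4) n_pos]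
    using Var_DR_summand_minus_Var_MR_summand_ge[OF muh_meas sq_obs] n_pos
    by (simp add: field_simps)
qed

end
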